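(* Let $f$ be a spectral density on $\Lambda$ and suppose that $f(\lambda)=0$ for almost all $\lambda$ with $e^{i\lambda}\in\Gamma$, where $\Gamma\subset\mathbb T$ is an arc of length $2\delta$ with $0<\delta<\pi$. Then $$\limsup_{n\to\infty}\sqrt[n]{\sigma_n(f)}\le\cos(\delta/2)<1,$$ so in particular $\sigma_n(f)$ decreases to zero exponentially.
   Context: $\Lambda=[-\pi,\pi]$, $\mathbb T$ the unit circle. A spectral density is $f\ge0$, $f\in L^1(\Lambda)$, positive on a set of positive measure. $\sigma_n^2(f)=\min_{c_1,\dots,c_n\in\mathbb C}\int_\Lambda|1-\sum_{k=1}^n c_ke^{-ik\lambda}|^2f(\lambda)\,d\lambda$ and $\sigma_n(f)=\sqrt{\sigma_n^2(f)}$. *)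

theory Defs
  imports "HOL-Analysis.Analysis" "HOL-Library.Liminf_Limsup"
begin

definition spectral_density :: "(real \<Rightarrow> real) \<Rightarrow> bool" where
  "spectral_density f \<longleftrightarrow>
     (\<forall>l\<in>{-pi..pi}. f l \<ge> 0) \<and>
     set_integrable lebesgue {-pi..pi} f \<and>
     emeasure lebesgue {l\<in>{-pi..pi}. f l > 0} > 0"

definition sigma_sq :: "nat \<Rightarrow> (real \<Rightarrow> real) \<Rightarrow> real" where
  "sigma_sq n f = (INF c::nat \<Rightarrow> complex.
      (LINT l:{-pi..pi}|lebesgue.
         (cmod (1 - (\<Sum>k=1..n. c k * exp (- \<i> * of_nat k * of_real l))))\<^sup>2 * f l))"

definition sigma :: "nat \<Rightarrow> (real \<Rightarrow> real) \<Rightarrow> real" where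
  "sigma n f = sqrt (sigma_sq n f)"

definition arc :: "real \<Rightarrow> real \<Rightarrow> complex set" where
  "arc a \<delta> = {exp (\<i> * of_real t) | t. a - \<delta> \<le> t \<and> t \<le> a + \<delta>}"

end

theory Submission
  imports Defs "HOL-Computational_Algebra.Polynomial"
begin

text \<open>Let \<open>\<rho> = cos (\<delta>/2)\<close> and \<open>c = -cos \<delta>\<close>, so \<open>1 - c = 2\<rho>\<^sup>2\<close>. Composing the Chebyshev
  polynomial \<open>T\<^sub>m\<close> with \<open>(z + 1/z - 1 - c)/(1 - c)\<close> and clearing denominators gives a polynomial
  \<open>P\<^sub>m\<close> of degree \<open>2m\<close> with \<open>|P\<^sub>m| \<le> 1\<close> on the part \<open>Re z \<ge> c\<close> of the unit circle and
  \<open>P\<^sub>m(0) = 1/(2 \<rho>^(2m))\<close>. After a rotation mapping the complement of the arc onto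
  \<open>Re z \<ge> c\<close>, the polynomial \<open>P\<^sub>m/P\<^sub>m(0)\<close> with \<open>m = n div 2\<close> is a predictor of order \<open>n\<close> whose error is
  at most \<open>2 \<rho>^(2m)\<close> wherever \<open>f\<close> may be nonzero. Hence \<open>\<sigma>\<^sub>n(f) \<le> 2 \<rho>^(2m) (\<integral>f)^(1/2) = O(\<rho>\<^sup>n)\<close>.\<close>

fun chebyshev_T :: "nat \<Rightarrow> real \<Rightarrow> real" where
  "chebyshev_T 0 x = 1"
| "chebyshev_T (Suc 0) x = x"
| "chebyshev_T (Suc (Suc n)) x = 2 * x * chebyshev_T (Suc n) x - chebyshev_T n x"

lemma chebyshev_T_cos: "chebyshev_T n (cos t) = cos (real n * t)"
proof (induction n rule: induct_nat_012)
  case (ge2 n)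
  have "cos (real (Suc (Suc n)) * t) + cos (real n * t) = 2 * cos t * cos (real (Suc n) * t)"
    using cos_add[of "real (Suc n) * t" t] cos_diff[of "real (Suc n) * t" t]
    by (simp add: algebra_simps)
  with ge2 show ?case by simp
qed simp_all

lemma abs_chebyshev_T_le_1: "\<bar>x\<bar> \<le> 1 \<Longrightarrow> \<bar>chebyshev_T n x\<bar> \<le> 1"
  using chebyshev_T_cos[of n "arccos x"] cos_arccos_abs[of x] by simp

text \<open>For \<open>c < 1\<close>, \<open>arc_poly c n\<close> is the polynomial of degree \<open>2 n\<close> equal to
  \<open>z\<^sup>n T\<^sub>n ((z + z\<inverse> - 1 - c) / (1 - c))\<close>; on the unit circle \<open>z + z\<inverse> = 2 Re z\<close>.\<close>
fun arc_poly :: "real \<Rightarrow> nat \<Rightarrow> complex poly" where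
  "arc_poly c 0 = 1"
| "arc_poly c (Suc 0) = smult (of_real (1 / (1 - c))) [:1, - of_real (1 + c), 1:]"
| "arc_poly c (Suc (Suc n)) = smult 2 (arc_poly c 1 * arc_poly c (Suc n)) - monom 1 2 * arc_poly c n"

lemma degree_arc_poly: "degree (arc_poly c n) \<le> 2 * n"
proof (induction n rule: induct_nat_012)
  case (ge2 n)
  have "degree (arc_poly c 1) \<le> 2" by simp
  then have "degree (smult 2 (arc_poly c 1 * arc_poly c (Suc n))) \<le> 2 * Suc (Suc n)"
    using degree_mult_le[of "arc_poly c 1" "arc_poly c (Suc n)"] ge2 by simp
  moreover have "degree (monom (1::complex) 2 * arc_poly c n) \<le> 2 * Suc (Suc n)"
    using degree_mult_le[of "monom (1::complex) 2" "arc_poly c n"] ge2 by (simp add: degree_monom_eq)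
  ultimately show ?case
    by (simp only: arc_poly.simps) (meson degree_diff_le)
qed simp_all

lemma poly_arc_poly_0: "poly (arc_poly c (Suc n)) 0 = of_real (2 ^ n / (1 - c) ^ Suc n)"
proof (induction n rule: induct_nat_012)
  case (ge2 n)
  have "poly (arc_poly c (Suc (Suc (Suc n)))) 0
      = of_real (2 * (1 / (1 - c))) * poly (arc_poly c (Suc (Suc n))) 0"
    by (simp add: poly_monom del: arc_poly.simps(2)) simp
  with ge2 show ?case
    by (simp only: of_real_mult[symmetric]) simp
qed (simp_all add: poly_monom)

lemma poly_arc_poly_1_unit_circle:
  assumes "cmod z = 1"
  shows "poly (arc_poly c 1) z = z * of_real ((2 * Re z - 1 - c) / (1 - c))"
proof -
  have "z * cnj z = 1"
    using complex_norm_square[of z] assms by simp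
  then have "z * of_real (2 * Re z) = z\<^sup>2 + 1"
    using complex_add_cnj[of z] by (metis distrib_left mult.commute power2_eq_square)
  then have "z\<^sup>2 + 1 - of_real (1 + c) * z = z * of_real (2 * Re z - 1 - c)"
    by (simp add: algebra_simps)
  moreover have "poly (arc_poly c 1) z = of_real (1 / (1 - c)) * (z\<^sup>2 + 1 - of_real (1 + c) * z)"
    by (simp add: algebra_simps power2_eq_square del: of_real_divide)
  ultimately show ?thesis
    by (simp add: divide_inverse)
qed

lemma poly_arc_poly_unit_circle:
  assumes "cmod z = 1" "c < 1"
  shows "poly (arc_poly c n) z = z ^ n * of_real (chebyshev_T n ((2 * Re z - 1 - c) / (1 - c)))"
proof (induction n rule: induct_nat_012)
  case (ge2 n)
  define x where "x = (2 * Re z - 1 - c) / (1 - c)"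
  have "poly (arc_poly c (Suc (Suc n))) z
      = 2 * poly (arc_poly c 1) z * poly (arc_poly c (Suc n)) z - z\<^sup>2 * poly (arc_poly c n) z"
    by (simp add: poly_monom del: arc_poly.simps(2))
  also have "\<dots> = 2 * (z * of_real x) * (z ^ Suc n * of_real (chebyshev_T (Suc n) x))
      - z\<^sup>2 * (z ^ n * of_real (chebyshev_T n x))"
    by (simp only: poly_arc_poly_1_unit_circle[OF assms(1)] ge2 x_def)
  also have "\<dots> = z ^ Suc (Suc n) * of_real (chebyshev_T (Suc (Suc n)) x)"
    by (simp add: algebra_simps power2_eq_square)
  finally show ?case
    by (simp add: x_def)
qed (use poly_arc_poly_1_unit_circle[OF assms(1)] in simp_all)

lemma norm_poly_arc_poly_le_1:
  assumes "cmod z = 1" "c < 1" "c \<le> Re z"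
  shows "cmod (poly (arc_poly c n) z) \<le> 1"
proof -
  have "Re z \<le> 1"
    using assms(1) abs_Re_le_cmod[of z] by simp
  with assms(2,3) have "\<bar>(2 * Re z - 1 - c) / (1 - c)\<bar> \<le> 1"
    by (auto simp: abs_le_iff divide_le_eq le_divide_eq)
  then show ?thesis
    using abs_chebyshev_T_le_1 by (simp add: poly_arc_poly_unit_circle[OF assms(1,2)] norm_mult norm_power assms(1))
qed

lemma poly_eq_coeff_0_plus_sum:
  fixes p :: "'a::comm_semiring_1 poly"
  assumes "degree p \<le> n"
  shows "poly p z = coeff p 0 + (\<Sum>k=1..n. coeff p k * z ^ k)"
proof -
  have "poly p z = (\<Sum>k\<le>n. coeff p k * z ^ k)"
    unfolding poly_altdef using assms by (intro sum.mono_neutral_left) (auto simp: coeff_eq_0)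
  also have "\<dots> = coeff p 0 + (\<Sum>k=1..n. coeff p k * z ^ k)"
    by (simp add: atMost_atLeast0 sum.atLeast_Suc_atMost)
  finally show ?thesis .
qed

lemma one_minus_exp_sum_eq_poly:
  fixes p :: "complex poly"
  assumes "degree p \<le> n" "poly p 0 \<noteq> 0"
  shows "1 - (\<Sum>k=1..n. - (coeff p k * u ^ k) / poly p 0 * exp (- \<i> * of_nat k * of_real l))
       = poly p (u * exp (- \<i> * of_real l)) / poly p 0"
proof -
  define w where "w = exp (- \<i> * of_real l)"
  have "exp (- \<i> * of_nat k * of_real l) = w ^ k" for k
    unfolding w_def by (simp add: exp_of_nat_mult[symmetric] mult.commute mult.left_commute)
  then have "(\<Sum>k=1..n. - (coeff p k * u ^ k) / poly p 0 * exp (- \<i> * of_nat k * of_real l))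
      = - (\<Sum>k=1..n. coeff p k * (u * w) ^ k) / poly p 0"
    by (simp add: sum_negf sum_divide_distrib power_mult_distrib mult_ac)
  moreover have "poly p (u * w) = poly p 0 + (\<Sum>k=1..n. coeff p k * (u * w) ^ k)"
    using poly_eq_coeff_0_plus_sum[OF assms(1)] by (simp add: poly_0_coeff_0)
  ultimately show ?thesis
    unfolding w_def[symmetric] using assms(2) by (simp add: field_simps)
qed

lemma exp_in_arc_if_cos_gt:
  assumes "0 \<le> \<delta>" "\<delta> < pi" "cos (l - a) > cos \<delta>"
  shows "exp (\<i> * of_real l) \<in> arc a \<delta>"
proof -
  define s where "s = arccos (cos (l - a))"
  define t where "t = (if sin (l - a) \<ge> 0 then s else - s)"
  have "cos s = cos (l - a)" "sin s = \<bar>sin (l - a)\<bar>" "0 \<le> s"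
    unfolding s_def using sin_arccos_abs[of "cos (l - a)"] arccos_lbound[of "cos (l - a)"]
    by (simp_all add: cos_arccos_abs sin_squared_eq[symmetric])
  moreover have "s < \<delta>"
    using cos_mono_less_eq[of \<delta> s] assms arccos_lbound[of "cos (l - a)"] arccos_ubound[of "cos (l - a)"]
      \<open>cos s = cos (l - a)\<close>
    unfolding s_def by auto
  ultimately have "cis t = cis (l - a)" "\<bar>t\<bar> \<le> \<delta>"
    by (auto simp: t_def complex_eq_iff)
  then have "cis (a + t) = cis (a + (l - a))"
    by (simp only: cis_mult[symmetric])
  then have "exp (\<i> * of_real (a + t)) = exp (\<i> * of_real l)"
    by (simp add: cis_conv_exp)
  with \<open>\<bar>t\<bar> \<le> \<delta>\<close> show ?thesis
    unfolding arc_def by (intro CollectI exI[of _ "a + t"]) auto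
qed

lemma norm_poly_arc_poly_0:
  assumes "0 < \<rho>" "1 - c = 2 * \<rho>\<^sup>2"
  shows "cmod (poly (arc_poly c (Suc k)) 0) * (2 * \<rho> ^ (2 * Suc k)) = 1"
proof -
  have "(1 - c) ^ Suc k = 2 ^ Suc k * \<rho> ^ (2 * Suc k)"
    unfolding assms(2) by (simp add: power_mult_distrib power_mult power2_eq_square)
  moreover have "cmod (poly (arc_poly c (Suc k)) 0) = 2 ^ k / (1 - c) ^ Suc k"
    using assms by (simp only: poly_arc_poly_0 norm_of_real) simp
  ultimately show ?thesis
    using assms(1) by simp
qed

lemma exists_predictor_small_off_arc:
  assumes "0 < \<delta>" "\<delta> < pi"
  obtains c :: "nat \<Rightarrow> complex"
  where "\<And>l. cos (l - a) \<le> cos \<delta> \<Longrightarrow>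
    cmod (1 - (\<Sum>k=1..n. c k * exp (- \<i> * of_nat k * of_real l))) \<le> 2 * cos (\<delta> / 2) ^ (2 * (n div 2))"
proof -
  define \<rho> where "\<rho> = cos (\<delta> / 2)"
  have "0 < \<rho>"
    unfolding \<rho>_def using assms by (intro cos_gt_zero_pi) auto
  define c where "c = - cos \<delta>"
  have c_eq: "1 - c = 2 * \<rho>\<^sup>2"
    unfolding c_def \<rho>_def using cos_double_cos[of "\<delta> / 2"] by simp
  moreover have "0 < \<rho>\<^sup>2"
    using \<open>0 < \<rho>\<close> by simp
  ultimately have "c < 1"
    by linarith
  define m where "m = n div 2"
  define p where "p = arc_poly c m"
  define u where "u = - exp (\<i> * of_real a)"
  have "degree p \<le> n"
    unfolding p_def m_def using degree_arc_poly[of c "n div 2"] by simp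
  have "poly p 0 \<noteq> 0 \<and> inverse (cmod (poly p 0)) \<le> 2 * \<rho> ^ (2 * m)"
  proof (cases m)
    case (Suc k)
    then have "cmod (poly p 0) * (2 * \<rho> ^ (2 * m)) = 1"
      using norm_poly_arc_poly_0[OF \<open>0 < \<rho>\<close> c_eq, of k] by (simp add: p_def)
    then show ?thesis
      using inverse_unique by fastforce
  qed (simp add: p_def)
  then have "poly p 0 \<noteq> 0" "inverse (cmod (poly p 0)) \<le> 2 * \<rho> ^ (2 * m)"
    by simp_all
  have "cmod (1 - (\<Sum>k=1..n. - (coeff p k * u ^ k) / poly p 0 * exp (- \<i> * of_nat k * of_real l)))
      \<le> 2 * \<rho> ^ (2 * m)" if "cos (l - a) \<le> cos \<delta>" for l
  proof -
    define z where "z = u * exp (- \<i> * of_real l)"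
    have "z = - cis (a - l)"
      unfolding z_def u_def cis_conv_exp by (simp add: exp_add[symmetric] algebra_simps)
    then have "cmod z = 1" "c \<le> Re z"
      using that by (simp_all add: c_def cos_diff mult.commute)
    then have "cmod (poly p z) \<le> 1"
      unfolding p_def using norm_poly_arc_poly_le_1 \<open>c < 1\<close> by blast
    then have "cmod (poly p z / poly p 0) \<le> inverse (cmod (poly p 0))"
      unfolding divide_inverse norm_mult norm_inverse by (simp add: mult_left_le_one_le)
    with \<open>inverse (cmod (poly p 0)) \<le> 2 * \<rho> ^ (2 * m)\<close> show ?thesis
      unfolding z_def one_minus_exp_sum_eq_poly[OF \<open>degree p \<le> n\<close> \<open>poly p 0 \<noteq> 0\<close>] by linarith
  qed
  then show ?thesis
    using that[of "\<lambda>k. - (coeff p k * u ^ k) / poly p 0"] unfolding \<rho>_def m_def by blast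
qed

lemma sigma_sq_le_of_error_bound:
  fixes f :: "real \<Rightarrow> real" and c :: "nat \<Rightarrow> complex"
  assumes nonneg: "\<And>l. l \<in> {-pi..pi} \<Longrightarrow> 0 \<le> f l"
    and integrable: "set_integrable lebesgue {-pi..pi} f"
    and bound: "AE l in lebesgue. l \<in> {-pi..pi} \<and> f l \<noteq> 0 \<longrightarrow>
      cmod (1 - (\<Sum>k=1..n. c k * exp (- \<i> * of_nat k * of_real l))) \<le> B"
  shows "sigma_sq n f \<le> B\<^sup>2 * (LINT l:{-pi..pi}|lebesgue. f l)"
proof -
  define err where "err c l = (cmod (1 - (\<Sum>k=1..n. c k * exp (- \<i> * of_nat k * of_real l))))\<^sup>2 * f l"
    for c :: "nat \<Rightarrow> complex" and l
  have "0 \<le> (LINT l:{-pi..pi}|lebesgue. err c l)" for c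
    unfolding set_lebesgue_integral_def err_def
    by (intro integral_nonneg_AE AE_I2) (auto simp: indicator_def nonneg)
  then have "sigma_sq n f \<le> (LINT l:{-pi..pi}|lebesgue. err c l)"
    unfolding sigma_sq_def err_def[symmetric] by (intro cInf_lower bdd_belowI[of _ 0]) auto
  also have "\<dots> \<le> (LINT l:{-pi..pi}|lebesgue. B\<^sup>2 * f l)"
    unfolding set_lebesgue_integral_def
  proof (rule integral_mono_AE')
    show "integrable lebesgue (\<lambda>l. indicator {-pi..pi} l *\<^sub>R (B\<^sup>2 * f l))"
      using set_integrable_mult_right[OF integrable, of "B\<^sup>2"] unfolding set_integrable_def by simp
    show "AE l in lebesgue. 0 \<le> indicator {-pi..pi} l *\<^sub>R (B\<^sup>2 * f l)"
      by (intro AE_I2) (auto simp: indicator_def nonneg)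
    show "AE l in lebesgue. indicator {-pi..pi} l *\<^sub>R err c l \<le> indicator {-pi..pi} l *\<^sub>R (B\<^sup>2 * f l)"
      using bound
    proof eventually_elim
      case (elim l)
      show ?case
      proof (cases "l \<in> {-pi..pi} \<and> f l \<noteq> 0")
        case True
        with elim have "(cmod (1 - (\<Sum>k=1..n. c k * exp (- \<i> * of_nat k * of_real l))))\<^sup>2 \<le> B\<^sup>2"
          by (intro power_mono) auto
        with True show ?thesis
          unfolding err_def by (simp add: mult_right_mono nonneg)
      qed (auto simp: err_def)
    qed
  qed
  finally show ?thesis
    by simp
qed

lemma sigma_le_if_vanishes_on_arc:
  assumes sd: "spectral_density f"
    and "0 < \<delta>" "\<delta> < pi"
    and vanishes: "AE l in lebesgue. l \<in> {-pi..pi} \<and> exp (\<i> * of_real l) \<in> arc a \<delta> \<longrightarrow> f l = 0"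
  shows "sigma n f \<le> 2 * cos (\<delta> / 2) ^ (2 * (n div 2)) * sqrt (LINT l:{-pi..pi}|lebesgue. f l)"
proof -
  define B where "B = 2 * cos (\<delta> / 2) ^ (2 * (n div 2))"
  have "0 \<le> B"
    unfolding B_def using assms(2,3) by (simp add: cos_ge_zero)
  obtain c where c: "\<And>l. cos (l - a) \<le> cos \<delta> \<Longrightarrow>
      cmod (1 - (\<Sum>k=1..n. c k * exp (- \<i> * of_nat k * of_real l))) \<le> B"
    using exists_predictor_small_off_arc[OF assms(2,3), of a n] unfolding B_def by blast
  have "AE l in lebesgue. l \<in> {-pi..pi} \<and> f l \<noteq> 0 \<longrightarrow>
      cmod (1 - (\<Sum>k=1..n. c k * exp (- \<i> * of_nat k * of_real l))) \<le> B"
    using vanishes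
  proof eventually_elim
    case (elim l)
    have "cos (l - a) \<le> cos \<delta>" if "exp (\<i> * of_real l) \<notin> arc a \<delta>"
      using exp_in_arc_if_cos_gt[of \<delta> l a] assms(2,3) that by fastforce
    with elim c show ?case
      by blast
  qed
  with sd have "sigma_sq n f \<le> B\<^sup>2 * (LINT l:{-pi..pi}|lebesgue. f l)"
    unfolding spectral_density_def by (intro sigma_sq_le_of_error_bound) auto
  then have "sigma n f \<le> sqrt (B\<^sup>2 * (LINT l:{-pi..pi}|lebesgue. f l))"
    unfolding sigma_def by (rule real_sqrt_le_mono)
  with \<open>0 \<le> B\<close> show ?thesis
    by (simp add: real_sqrt_mult B_def)
qed

lemma limsup_root_le_of_le_geometric:
  fixes s :: "nat \<Rightarrow> real"
  assumes "0 < K" "0 \<le> \<rho>" "\<And>n. n \<noteq> 0 \<Longrightarrow> s n \<le> K * \<rho> ^ n"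
  shows "limsup (\<lambda>n. ereal (root n (s n))) \<le> ereal \<rho>"
proof -
  have "root n (s n) \<le> root n K * \<rho>" if "n \<noteq> 0" for n
  proof -
    have "root n (s n) \<le> root n (K * \<rho> ^ n)"
      using that assms(3) by (intro real_root_le_mono) auto
    also have "\<dots> = root n K * \<rho>"
      using that assms(2) by (simp add: real_root_mult real_root_power_cancel)
    finally show ?thesis .
  qed
  then have "limsup (\<lambda>n. ereal (root n (s n))) \<le> limsup (\<lambda>n. ereal (root n K * \<rho>))"
    by (intro Limsup_mono) (auto simp: eventually_sequentially intro: exI[of _ 1])
  also have "\<dots> = ereal \<rho>"
    using tendsto_mult[OF LIMSEQ_root_const[OF assms(1)] tendsto_const[of \<rho>]]
    by (intro lim_imp_Limsup) auto
  finally show ?thesis .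
qed

theorem mainTheorem2:
  fixes f :: "real \<Rightarrow> real" and a \<delta> :: real
  assumes "spectral_density f"
    and "0 < \<delta>" and "\<delta> < pi"
    and "AE l in lebesgue. l \<in> {-pi..pi} \<and> exp (\<i> * of_real l) \<in> arc a \<delta> \<longrightarrow> f l = 0"
  shows "limsup (\<lambda>n. ereal (root n (sigma n f))) \<le> ereal (cos (\<delta> / 2)) \<and> cos (\<delta> / 2) < 1"
proof -
  define \<rho> where "\<rho> = cos (\<delta> / 2)"
  have "0 < \<rho>" "\<rho> < 1"
    unfolding \<rho>_def using assms(2,3) cos_mono_less_eq[of "\<delta> / 2" 0] by (auto intro: cos_gt_zero_pi)
  define I where "I = (LINT l:{-pi..pi}|lebesgue. f l)"
  have "0 \<le> I"
    using assms(1) unfolding I_def set_lebesgue_integral_def spectral_density_def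
    by (intro integral_nonneg_AE AE_I2) (auto simp: indicator_def)
  have "sigma n f \<le> (2 * sqrt I / \<rho> + 1) * \<rho> ^ n" if "n \<noteq> 0" for n
  proof -
    have "\<rho> ^ (2 * (n div 2)) \<le> \<rho> ^ (n - 1)"
      using \<open>0 < \<rho>\<close> \<open>\<rho> < 1\<close> by (intro power_decreasing) auto
    also have "\<dots> = \<rho> ^ n / \<rho>"
      using that \<open>0 < \<rho>\<close> by (simp add: power_diff)
    finally have "\<rho> ^ (2 * (n div 2)) \<le> \<rho> ^ n / \<rho>" .
    have "sigma n f \<le> 2 * \<rho> ^ (2 * (n div 2)) * sqrt I"
      unfolding \<rho>_def I_def by (rule sigma_le_if_vanishes_on_arc[OF assms])
    also have "\<dots> \<le> 2 * (\<rho> ^ n / \<rho>) * sqrt I"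
      using \<open>\<rho> ^ (2 * (n div 2)) \<le> \<rho> ^ n / \<rho>\<close> \<open>0 \<le> I\<close> by (intro mult_right_mono) auto
    also have "\<dots> \<le> (2 * sqrt I / \<rho> + 1) * \<rho> ^ n"
      using \<open>0 < \<rho>\<close> by (simp add: field_simps)
    finally show ?thesis .
  qed
  then have "limsup (\<lambda>n. ereal (root n (sigma n f))) \<le> ereal \<rho>"
    using \<open>0 < \<rho>\<close> \<open>0 \<le> I\<close>
    by (intro limsup_root_le_of_le_geometric[where K = "2 * sqrt I / \<rho> + 1"]) (auto intro: add_nonneg_pos)
  with \<open>\<rho> < 1\<close> show ?thesis
    unfolding \<rho>_def by simp
qed

end
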